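(* Let $n,N\ge 1$ and $\varepsilon\ge 0$ be integers with $\varepsilon/n\le 1/2$ and $N<2^{n(1-h(\varepsilon/n))-1}$. Suppose the $N$ enrolled templates are distinct (drawn uniformly without replacement from $\mathbb{Z}_2^n$), so that the success probability of a single uniformly random guess is $$p=1-\prod_{\ell=0}^{N-1}\left(1-\frac{2^n}{2^n-\ell}V_\varepsilon\right),$$ and let $m_{out}=-\ln 2/\ln(1-p)$ be the median number of trials for the attacker to successfully impersonate a user. Then $$m_{out}=\Omega\left(2^{n(1-h(\varepsilon/n))-\log_2(N)-\log_2\left(1+6\frac{N-1}{2^{n+1}}\right)}\right)$$ and $$m_{out}=O\left(2^{n(1-h(\varepsilon/n))+\frac{1}{2}\log_2\left(\varepsilon\left(1-\frac{\varepsilon}{n}\right)\right)-\log_2 N-\log_2\left(1+\frac{N-1}{2^{n+1}}\right)}\right).$$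
   Context: Templates are binary vectors in $\mathbb{Z}_2^n$ compared with the Hamming distance $d_{\mathcal H}$; a guess $t$ is accepted against enrolled template $v$ if $d_{\mathcal H}(t,v)\le\varepsilon$. The attacker draws independent uniformly random templates until one is accepted against some enrolled template. $|B_\varepsilon|=\sum_{k=0}^{\varepsilon}\binom{n}{k}$ is the size of a Hamming ball of radius $\varepsilon$, $V_\varepsilon=|B_\varepsilon|/2^n$, and $h(x)=-x\log_2x-(1-x)\log_2(1-x)$ is the binary entropy function. *)

theory Defs
  imports Complex_Main
begin

definition bin_entropy :: "real \<Rightarrow> real" where
  "bin_entropy x = (if x = 0 \<or> x = 1 then 0
                    else - x * log 2 x - (1 - x) * log 2 (1 - x))"

text \<open>Relative volume of a Hamming ball of radius eps in Z_2^n.\<close>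
definition ball_vol :: "nat \<Rightarrow> nat \<Rightarrow> real" where
  "ball_vol n eps = real (\<Sum>k\<le>eps. n choose k) / 2 ^ n"

definition succ_prob :: "nat \<Rightarrow> nat \<Rightarrow> nat \<Rightarrow> real" where
  "succ_prob n N eps =
     1 - (\<Prod>l<N. 1 - (2 ^ n / (2 ^ n - real l)) * ball_vol n eps)"

definition m_out :: "nat \<Rightarrow> nat \<Rightarrow> nat \<Rightarrow> real" where
  "m_out n N eps = - ln 2 / ln (1 - succ_prob n N eps)"

end

(* With T = 2 powr (n (1 - h (eps/n))) and V = ball_vol n eps, Stirling-type bounds on ln m!
   give exp (-3/2) / (sqrt (eps (1 - eps/n)) T) <= V <= 1/T.  As N < T/2 <= 2^n / 2, every factor
   2^n / (2^n - l) V of the product defining 1 - p lies in [V, 2V] and below 2/3, where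
   -3x <= ln (1 - x) <= -x.  Hence N V <= -ln (1 - p) <= 6 N V, so m_out = ln 2 / (-ln (1 - p))
   lies between ln 2 / (6 N V) and ln 2 / (N V), and the two bounds on V give the claim; the
   logarithmic correction terms lie between 0 and 2 and only shift the constants. *)
theory Submission
  imports Defs
begin

lemma ln_add_one_lower_bound:
  fixes x :: real
  assumes "0 \<le> x"
  shows "2 * x / (2 + x) \<le> ln (1 + x)"
proof -
  let ?f = "\<lambda>t::real. ln (1 + t) - 2 * t / (2 + t)"
  have "?f 0 \<le> ?f x"
  proof (rule DERIV_nonneg_imp_nondecreasing[OF assms])
    fix t :: real
    assume t: "0 \<le> t" "t \<le> x"
    have "DERIV ?f t :> 1 / (1 + t) - (2 * (2 + t) - 2 * t) / (2 + t)\<^sup>2"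
      using t by (auto intro!: derivative_eq_intros simp: power2_eq_square)
    moreover have "1 / (1 + t) - (2 * (2 + t) - 2 * t) / (2 + t)\<^sup>2 = t\<^sup>2 / ((1 + t) * (2 + t)\<^sup>2)"
      using t by (simp add: divide_simps power2_eq_square) (simp add: algebra_simps)
    ultimately show "\<exists>y. DERIV ?f t :> y \<and> 0 \<le> y"
      using t by auto
  qed
  then show ?thesis by simp
qed

lemma ln_add_one_upper_bound:
  fixes x :: real
  assumes "0 \<le> x"
  shows "ln (1 + x) \<le> x - x\<^sup>2 / 2 + x ^ 3 / 3"
proof -
  let ?f = "\<lambda>t::real. t - t\<^sup>2 / 2 + t ^ 3 / 3 - ln (1 + t)"
  have "?f 0 \<le> ?f x"
  proof (rule DERIV_nonneg_imp_nondecreasing[OF assms])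
    fix t :: real
    assume t: "0 \<le> t" "t \<le> x"
    have "DERIV ?f t :> 1 - t + t\<^sup>2 - 1 / (1 + t)"
      using t by (auto intro!: derivative_eq_intros simp: power2_eq_square)
    moreover have "1 - t + t\<^sup>2 - 1 / (1 + t) = t ^ 3 / (1 + t)"
      using t by (simp add: field_simps power2_eq_square power3_eq_cube)
    ultimately show "\<exists>y. DERIV ?f t :> y \<and> 0 \<le> y"
      using t by auto
  qed
  then show ?thesis by simp
qed

lemma ln_one_minus_lower_bound:
  fixes x :: real
  assumes "0 \<le> x" "x \<le> 2 / 3"
  shows "- 3 * x \<le> ln (1 - x)"
proof -
  have "- ln (1 - x) = ln (1 / (1 - x))"
    using assms by (simp add: ln_div)
  also have "\<dots> \<le> 1 / (1 - x) - 1"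
    using assms by (intro ln_le_minus_one) simp
  also have "\<dots> = x / (1 - x)"
    using assms by (simp add: field_simps)
  also have "\<dots> \<le> 3 * x"
    using assms mult_left_mono[of "3 * x" 2 x] by (simp add: field_simps)
  finally show ?thesis by simp
qed

lemma ln_prod_one_minus_bounds:
  fixes x :: "'a \<Rightarrow> real"
  assumes "finite A" and "\<And>i. i \<in> A \<Longrightarrow> 0 \<le> x i \<and> x i \<le> 2 / 3"
  shows "- 3 * (\<Sum>i\<in>A. x i) \<le> ln (\<Prod>i\<in>A. 1 - x i)"
    and "ln (\<Prod>i\<in>A. 1 - x i) \<le> - (\<Sum>i\<in>A. x i)"
proof -
  have ln_prod_eq: "ln (\<Prod>i\<in>A. 1 - x i) = (\<Sum>i\<in>A. ln (1 - x i))"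
    using assms by (intro ln_prod) fastforce+
  have "- 3 * x i \<le> ln (1 - x i)" and "ln (1 - x i) \<le> - x i" if "i \<in> A" for i
    using assms(2)[OF that] ln_one_minus_lower_bound[of "x i"] ln_one_minus_pos_upper_bound[of "x i"]
    by auto
  then show "- 3 * (\<Sum>i\<in>A. x i) \<le> ln (\<Prod>i\<in>A. 1 - x i)"
    and "ln (\<Prod>i\<in>A. 1 - x i) \<le> - (\<Sum>i\<in>A. x i)"
    by (simp_all add: ln_prod_eq sum_distrib_left sum_negf[symmetric] sum_mono)
qed

definition stirling_error :: "nat \<Rightarrow> real" where
  "stirling_error m = ln (fact m) - ((real m + 1 / 2) * ln (real m) - real m)"

lemma stirling_error_Suc:
  assumes "1 \<le> m"
  shows "stirling_error (Suc m) = stirling_error m - ((real m + 1 / 2) * ln (1 + 1 / real m) - 1)"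
proof -
  have "1 + 1 / real m = (real m + 1) / real m"
    using assms by (simp add: field_simps)
  then have ln_ratio: "ln (1 + 1 / real m) = ln (real m + 1) - ln (real m)"
    using assms by (simp add: ln_div)
  have ln_fact_Suc: "ln (fact (Suc m) :: real) = ln (real m + 1) + ln (fact m)"
    by (simp add: ln_mult add.commute)
  show ?thesis
    unfolding stirling_error_def ln_ratio ln_fact_Suc of_nat_Suc by (simp add: algebra_simps)
qed

lemma ln_one_plus_inverse_bounds:
  fixes x :: real
  assumes "1 \<le> x"
  shows "1 \<le> (x + 1 / 2) * ln (1 + 1 / x)"
    and "(x + 1 / 2) * ln (1 + 1 / x) \<le> 1 + 1 / (2 * x) - 1 / (2 * (x + 1))"
proof -
  have x: "0 < x"
    using assms by simp
  have "1 / (x + 1 / 2) = 2 * (1 / x) / (2 + 1 / x)"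
    using assms by (simp add: field_simps)
  also have "\<dots> \<le> ln (1 + 1 / x)"
    by (rule ln_add_one_lower_bound) (use assms in simp)
  finally show "1 \<le> (x + 1 / 2) * ln (1 + 1 / x)"
    using assms by (simp add: field_simps)
  have "(x + 1 / 2) * ln (1 + 1 / x) \<le> (x + 1 / 2) * (1 / x - (1 / x)\<^sup>2 / 2 + (1 / x) ^ 3 / 3)"
    using assms by (intro mult_left_mono ln_add_one_upper_bound) auto
  also have "\<dots> = 1 + 1 / (12 * x\<^sup>2) + 1 / (6 * x ^ 3)"
    using assms by (simp add: field_simps power2_eq_square power3_eq_cube)
  also have "\<dots> \<le> 1 + 1 / (4 * x\<^sup>2)"
    using assms by (simp add: field_simps power2_eq_square power3_eq_cube)
  also have "\<dots> \<le> 1 + 1 / (2 * x * (x + 1))"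
    using assms by (simp add: divide_left_mono power2_eq_square)
  also have "\<dots> = 1 + 1 / (2 * x) - 1 / (2 * (x + 1))"
    using x by (simp add: divide_simps) (simp add: algebra_simps)
  finally show "(x + 1 / 2) * ln (1 + 1 / x) \<le> 1 + 1 / (2 * x) - 1 / (2 * (x + 1))" .
qed

lemma stirling_error_bounds:
  assumes "1 \<le> m"
  shows "1 / 2 + 1 / (2 * real m) \<le> stirling_error m \<and> stirling_error m \<le> 1"
  using assms
proof (induction m rule: dec_induct)
  case base
  then show ?case by (simp add: stirling_error_def)
next
  case (step m)
  have m: "1 \<le> real m"
    using step.hyps(1) by simp
  have "1 / (2 * real (Suc m)) = 1 / (2 * (real m + 1))"
    by simp
  then show ?case
    using step.IH ln_one_plus_inverse_bounds[OF m] stirling_error_Suc[OF step.hyps(1)]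
    by (simp only:) linarith
qed

lemma ln_fact_bounds:
  assumes "1 \<le> m"
  shows "(real m + 1 / 2) * ln (real m) - real m + 1 / 2 \<le> ln (fact m)"
    and "ln (fact m) \<le> (real m + 1 / 2) * ln (real m) - real m + 1"
proof -
  have "0 \<le> 1 / (2 * real m)"
    by simp
  then show "(real m + 1 / 2) * ln (real m) - real m + 1 / 2 \<le> ln (fact m)"
    and "ln (fact m) \<le> (real m + 1 / 2) * ln (real m) - real m + 1"
    using stirling_error_bounds[OF assms] unfolding stirling_error_def by linarith+
qed

lemma ln_weight_eq_entropy:
  assumes "0 < k" "k < n"
  shows "real k * ln (real k / real n) + real (n - k) * ln (real (n - k) / real n)
           = - real n * bin_entropy (real k / real n) * ln 2"
proof -
  define p where "p = real k / real n"
  have p: "0 < p" "p < 1"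
    using assms by (auto simp: p_def)
  have k_eq: "real k = real n * p" and nk_eq: "real (n - k) = real n * (1 - p)"
    using assms by (auto simp: p_def of_nat_diff field_simps)
  have ratio: "real (n - k) / real n = 1 - p"
    using assms by (simp add: nk_eq)
  have "bin_entropy p * ln 2 = - p * ln p - (1 - p) * ln (1 - p)"
    using p by (simp add: bin_entropy_def log_def field_simps)
  then have "real n * bin_entropy p * ln 2 = real n * (- p * ln p - (1 - p) * ln (1 - p))"
    by (simp add: mult.assoc)
  then show ?thesis
    unfolding p_def[symmetric] ratio unfolding k_eq nk_eq
    by (simp add: algebra_simps)
qed

lemma binomial_weight_eq_entropy:
  assumes "0 < k" "k < n"
  shows "(real k / real n) ^ k * (1 - real k / real n) ^ (n - k)
           = 2 powr (- real n * bin_entropy (real k / real n))"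
proof -
  have ratio: "1 - real k / real n = real (n - k) / real n"
    using assms by (simp add: of_nat_diff field_simps)
  have pos: "0 < real k / real n" "0 < real (n - k) / real n"
    using assms by auto
  let ?w = "(real k / real n) ^ k * (1 - real k / real n) ^ (n - k)"
  have "0 < ?w"
    using pos unfolding ratio by (intro mult_pos_pos zero_less_power)
  then have "?w = exp (ln ?w)"
    by simp
  also have "ln ?w = - real n * bin_entropy (real k / real n) * ln 2"
    unfolding ratio ln_mult_pos[OF zero_less_power[OF pos(1)] zero_less_power[OF pos(2)]] ln_realpow
    by (rule ln_weight_eq_entropy[OF assms])
  finally show ?thesis
    by (simp add: powr_def algebra_simps)
qed

lemma sum_binomial_le_entropy:
  assumes "2 * k \<le> n"
  shows "real (\<Sum>j\<le>k. n choose j) \<le> 2 powr (real n * bin_entropy (real k / real n))"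
proof (cases "k = 0")
  case True
  then show ?thesis by (simp add: bin_entropy_def)
next
  case False
  then have k: "0 < k" "k < n"
    using assms by auto
  define p where "p = real k / real n"
  have p: "0 < p" "p \<le> 1 - p"
    using k assms by (auto simp: p_def field_simps)
  have weight_mono: "p ^ k * (1 - p) ^ (n - k) \<le> p ^ j * (1 - p) ^ (n - j)" if "j \<le> k" for j
  proof -
    have "p ^ k * (1 - p) ^ (n - k) = p ^ j * (p ^ (k - j) * (1 - p) ^ (n - k))"
      using that by (simp add: power_add[symmetric])
    also have "\<dots> \<le> p ^ j * ((1 - p) ^ (k - j) * (1 - p) ^ (n - k))"
      using p by (intro mult_left_mono mult_right_mono power_mono) auto
    also have "\<dots> = p ^ j * (1 - p) ^ (n - j)"
      using that k by (simp add: power_add[symmetric])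
    finally show ?thesis .
  qed
  have "real (\<Sum>j\<le>k. n choose j) * (p ^ k * (1 - p) ^ (n - k))
          \<le> (\<Sum>j\<le>k. real (n choose j) * p ^ j * (1 - p) ^ (n - j))"
    unfolding of_nat_sum sum_distrib_right
    using p by (intro sum_mono) (simp add: weight_mono mult.assoc mult_left_mono)
  also have "\<dots> \<le> (\<Sum>j\<le>n. real (n choose j) * p ^ j * (1 - p) ^ (n - j))"
    using p k by (intro sum_mono2) auto
  also have "\<dots> = 1"
    using binomial_ring[of p "1 - p" n] by simp
  finally have "real (\<Sum>j\<le>k. n choose j) / 2 powr (real n * bin_entropy (real k / real n)) \<le> 1"
    unfolding p_def binomial_weight_eq_entropy[OF k] by (simp add: powr_minus_divide)
  then show ?thesis
    by simp
qed

lemma binomial_ge_entropy: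
  assumes "0 < k" "k < n"
  shows "exp (- 3 / 2) * 2 powr (real n * bin_entropy (real k / real n))
           / sqrt (real k * (1 - real k / real n)) \<le> real (n choose k)"
proof -
  have pos: "0 < real k" "0 < real (n - k)" "0 < real n"
    using assms by auto
  have s_eq: "real k * (1 - real k / real n) = real k * real (n - k) / real n"
    using assms by (simp add: of_nat_diff field_simps)
  have nk: "real n = real k + real (n - k)"
    using assms by simp
  then have n_ln: "real n * ln (real n) = real k * ln (real n) + real (n - k) * ln (real n)"
    by (metis distrib_right)
  have one_le: "1 \<le> n" "1 \<le> k" "1 \<le> n - k"
    using assms by auto
  have ln_sqrt_eq: "ln (sqrt (real k * (1 - real k / real n)))
                      = (ln (real k) + ln (real (n - k)) - ln (real n)) / 2"
    unfolding s_eq using pos by (simp add: ln_sqrt ln_divide_pos ln_mult_pos)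
  have "ln (real (n choose k)) = ln (fact n) - ln (fact k) - ln (fact (n - k))"
    using assms by (simp add: binomial_fact ln_div ln_mult)
  also have "\<dots> \<ge> - (real k * ln (real k / real n) + real (n - k) * ln (real (n - k) / real n))
                    - 3 / 2 - ln (sqrt (real k * (1 - real k / real n)))"
    unfolding ln_sqrt_eq ln_divide_pos[OF pos(1,3)] ln_divide_pos[OF pos(2,3)]
    using ln_fact_bounds(1)[OF one_le(1)] ln_fact_bounds(2)[OF one_le(2)] ln_fact_bounds(2)[OF one_le(3)]
      n_ln nk
    by (simp only: right_diff_distrib distrib_right) argo
  finally have "real n * bin_entropy (real k / real n) * ln 2 - 3 / 2
                  - ln (sqrt (real k * (1 - real k / real n))) \<le> ln (real (n choose k))"
    unfolding ln_weight_eq_entropy[OF assms] by simp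
  moreover have "0 < sqrt (real k * (1 - real k / real n))"
    unfolding s_eq using pos by simp
  ultimately have "ln (exp (- 3 / 2) * 2 powr (real n * bin_entropy (real k / real n))
                     / sqrt (real k * (1 - real k / real n))) \<le> ln (real (n choose k))"
    by (simp add: ln_divide_pos ln_mult_pos)
  then show ?thesis
    using assms by (subst (asm) ln_le_cancel_iff) auto
qed

lemma two_powr_mult_one_minus:
  "2 powr (real n * (1 - x)) = 2 ^ n / 2 powr (real n * x)"
  by (simp add: right_diff_distrib powr_diff powr_realpow)

lemma ball_vol_ge_inverse_card: "1 / 2 ^ n \<le> ball_vol n eps"
proof -
  have "n choose 0 \<le> (\<Sum>j\<le>eps. n choose j)"
    by (rule member_le_sum) auto
  then have "1 \<le> real (\<Sum>j\<le>eps. n choose j)"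
    by (metis binomial_n_0 of_nat_1 of_nat_le_iff)
  then show ?thesis
    unfolding ball_vol_def by (rule divide_right_mono) simp
qed

lemma ball_vol_pos: "0 < ball_vol n eps"
  by (rule less_le_trans[OF _ ball_vol_ge_inverse_card]) simp

lemma ball_vol_le_entropy:
  assumes "2 * eps \<le> n"
  shows "ball_vol n eps \<le> 1 / 2 powr (real n * (1 - bin_entropy (real eps / real n)))"
  using sum_binomial_le_entropy[OF assms]
  unfolding ball_vol_def two_powr_mult_one_minus by (simp add: divide_right_mono)

lemma ball_vol_ge_entropy:
  assumes "0 < eps" "eps < n"
  shows "exp (- 3 / 2) / (sqrt (real eps * (1 - real eps / real n))
           * 2 powr (real n * (1 - bin_entropy (real eps / real n)))) \<le> ball_vol n eps"
proof -
  have "real (n choose eps) \<le> real (\<Sum>j\<le>eps. n choose j)"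
    by (subst of_nat_le_iff, rule member_le_sum) auto
  then show ?thesis
    using binomial_ge_entropy[OF assms]
    unfolding ball_vol_def two_powr_mult_one_minus by (simp add: divide_right_mono field_simps)
qed

lemma entropy_exponent_le:
  assumes "2 * eps \<le> n"
  shows "2 powr (real n * (1 - bin_entropy (real eps / real n))) \<le> 2 ^ n"
  using order_trans[OF ball_vol_ge_inverse_card ball_vol_le_entropy[OF assms]]
  by (simp add: divide_simps)

lemma guess_factor_bounds:
  fixes a T V :: real and l :: nat
  assumes "1 / a \<le> V" "V \<le> 1 / T" "2 < T" "4 \<le> a" "real l < T / 2"
  shows "V \<le> a / (a - real l) * V" and "a / (a - real l) * V \<le> 2 * V"
    and "a / (a - real l) * V \<le> 2 / 3"
proof -
  have T_le_a: "T \<le> a"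
    using assms(1-4) order_trans[OF assms(1,2)] by (simp add: divide_simps)
  have half: "a / 2 < a - real l"
    using assms(5) T_le_a by linarith
  have V: "0 < V"
    using less_le_trans[OF _ assms(1)] assms(4) by simp
  have ratio: "1 \<le> a / (a - real l)" "a / (a - real l) \<le> 2"
    using half assms(4) by (simp_all add: divide_simps)
  show "V \<le> a / (a - real l) * V" and "a / (a - real l) * V \<le> 2 * V"
    using mult_right_mono[OF ratio(1), of V] mult_right_mono[OF ratio(2), of V] V by simp_all
  have "2 * (a - T / 2) * T - 3 * a = (T - 2) * (a - T) + (T - 2) * (a - 2) + (a - 4)"
    by (simp add: algebra_simps)
  also have "\<dots> \<ge> 0"
    using assms(3,4) T_le_a by simp
  finally have "3 * a \<le> 2 * (a - T / 2) * T"
    by simp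
  also have "\<dots> < 2 * (a - real l) * T"
    using assms(3,5) by simp
  finally have "3 * a < 2 * ((a - real l) * T)"
    by (simp only: mult.assoc)
  then have "a / (a - real l) * (1 / T) \<le> 2 / 3"
    using half assms(3,4) by (simp add: divide_simps)
  moreover have "a / (a - real l) * V \<le> a / (a - real l) * (1 / T)"
    using assms(2) ratio(1) by (intro mult_left_mono) auto
  ultimately show "a / (a - real l) * V \<le> 2 / 3"
    by linarith
qed

lemma m_out_bounds:
  assumes "1 \<le> N" "ball_vol n eps \<le> 1 / T" "real N < T / 2"
  shows "ln 2 / (6 * real N * ball_vol n eps) \<le> m_out n N eps"
    and "m_out n N eps \<le> ln 2 / (real N * ball_vol n eps)"
proof -
  define V where "V = ball_vol n eps"
  define a :: real where "a = 2 ^ n"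
  define x where "x l = a / (a - real l) * V" for l :: nat
  have T: "2 < T"
    using assms(1,3) by simp
  have "0 < a"
    unfolding a_def by simp
  have V_ge: "1 / a \<le> V"
    unfolding V_def a_def by (rule ball_vol_ge_inverse_card)
  have "2 < a"
    using T \<open>0 < a\<close> order_trans[OF V_ge assms(2)[folded V_def]] by (simp add: divide_simps)
  then have "1 < n"
    unfolding a_def using power_strict_increasing_iff[of "2::real" 1 n] by simp
  then have a: "4 \<le> a"
    unfolding a_def using power_increasing[of 2 n "2::real"] by simp
  have x: "V \<le> x l" "x l \<le> 2 * V" "x l \<le> 2 / 3" if "l < N" for l
    unfolding x_def using guess_factor_bounds[OF V_ge assms(2)[folded V_def] T a] that assms(3)
    by simp_all
  have prod_eq: "1 - succ_prob n N eps = (\<Prod>l<N. 1 - x l)"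
    unfolding succ_prob_def x_def V_def a_def by simp
  have x_range: "0 \<le> x l \<and> x l \<le> 2 / 3" if "l \<in> {..<N}" for l
    using x that by fastforce
  have "(\<Sum>l<N. V) \<le> (\<Sum>l<N. x l)" and "(\<Sum>l<N. x l) \<le> (\<Sum>l<N. 2 * V)"
    using x by (intro sum_mono, simp)+
  then have "real N * V \<le> (\<Sum>l<N. x l)" and "(\<Sum>l<N. x l) \<le> 2 * (real N * V)"
    by simp_all
  moreover have "- 3 * (\<Sum>l<N. x l) \<le> ln (1 - succ_prob n N eps)"
    and "ln (1 - succ_prob n N eps) \<le> - (\<Sum>l<N. x l)"
    unfolding prod_eq using x_range by (blast intro: ln_prod_one_minus_bounds)+
  ultimately have L_lower: "real N * V \<le> - ln (1 - succ_prob n N eps)"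
    and L_upper: "- ln (1 - succ_prob n N eps) \<le> 6 * (real N * V)"
    by linarith+
  have NV: "0 < real N * V"
    using ball_vol_pos assms(1) unfolding V_def by simp
  have m_out_eq: "m_out n N eps = ln 2 / (- ln (1 - succ_prob n N eps))"
    unfolding m_out_def by simp
  show "ln 2 / (6 * real N * ball_vol n eps) \<le> m_out n N eps"
    unfolding m_out_eq V_def[symmetric] mult.assoc
    by (rule divide_left_mono[OF L_upper _ mult_pos_pos]) (use L_lower NV in simp_all)
  show "m_out n N eps \<le> ln 2 / (real N * ball_vol n eps)"
    unfolding m_out_eq V_def[symmetric]
    by (rule divide_left_mono[OF L_lower _ mult_pos_pos]) (use L_lower NV in simp_all)
qed

lemma m_out_lower_bound:
  assumes "1 \<le> N" "2 * eps \<le> n"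
    and "real N < 2 powr (real n * (1 - bin_entropy (real eps / real n)) - 1)"
  shows "ln 2 / 6 * 2 powr (real n * (1 - bin_entropy (real eps / real n))
           - log 2 (real N) - log 2 (1 + 6 * (real N - 1) / 2 ^ (n + 1))) \<le> m_out n N eps"
proof -
  define T where "T = 2 powr (real n * (1 - bin_entropy (real eps / real n)))"
  define Q :: real where "Q = 1 + 6 * (real N - 1) / 2 ^ (n + 1)"
  have N: "0 < real N" and Q: "1 \<le> Q"
    using assms(1) by (simp_all add: Q_def)
  have V_le: "ball_vol n eps \<le> 1 / T"
    unfolding T_def by (rule ball_vol_le_entropy[OF assms(2)])
  have "ln 2 / 6 * 2 powr (real n * (1 - bin_entropy (real eps / real n))
          - log 2 (real N) - log 2 Q) = ln 2 / 6 * (T / real N / Q)"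
    using N Q by (simp add: T_def powr_diff)
  also have "\<dots> \<le> ln 2 / 6 * (T / real N)"
    using N Q by (intro mult_left_mono) (auto simp: T_def divide_simps)
  also have "\<dots> \<le> ln 2 / (6 * real N * ball_vol n eps)"
    using V_le ball_vol_pos[of n eps] N by (simp add: T_def divide_simps mult.commute)
  also have "\<dots> \<le> m_out n N eps"
    by (rule m_out_bounds(1)[OF assms(1) V_le]) (use assms(3) in \<open>simp add: T_def powr_diff\<close>)
  finally show ?thesis
    unfolding Q_def .
qed

lemma m_out_upper_bound:
  assumes "1 \<le> N" "1 \<le> eps" "2 * eps \<le> n"
    and "real N < 2 powr (real n * (1 - bin_entropy (real eps / real n)) - 1)"
  shows "m_out n N eps \<le> 2 * ln 2 * exp (3 / 2) * 2 powr (real n * (1 - bin_entropy (real eps / real n))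
           + 1 / 2 * log 2 (real eps * (1 - real eps / real n))
           - log 2 (real N) - log 2 (1 + (real N - 1) / 2 ^ (n + 1)))"
proof -
  define T where "T = 2 powr (real n * (1 - bin_entropy (real eps / real n)))"
  define s where "s = real eps * (1 - real eps / real n)"
  define Q :: real where "Q = 1 + (real N - 1) / 2 ^ (n + 1)"
  have N: "0 < real N" and T: "0 < T" and s: "0 < s"
    using assms(1-3) by (simp_all add: T_def s_def divide_simps)
  have N_lt: "real N < T / 2"
    using assms(4) by (simp add: T_def powr_diff)
  have "real N \<le> 2 ^ n"
    using N_lt entropy_exponent_le[OF assms(3)] unfolding T_def by linarith
  then have "real N - 1 \<le> 2 ^ (n + 1)"
    using power_increasing[of n "n + 1" "2::real"] by linarith
  then have Q: "1 \<le> Q" "Q \<le> 2"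
    using assms(1) by (simp_all add: Q_def)
  have V_ge: "exp (- 3 / 2) / (sqrt s * T) \<le> ball_vol n eps"
    unfolding s_def T_def using assms(2,3) by (intro ball_vol_ge_entropy) auto
  have "m_out n N eps \<le> ln 2 / (real N * ball_vol n eps)"
    by (rule m_out_bounds(2)[OF assms(1) ball_vol_le_entropy[OF assms(3)] N_lt[unfolded T_def]])
  also have "\<dots> \<le> ln 2 / (real N * (exp (- 3 / 2) / (sqrt s * T)))"
    using V_ge ball_vol_pos[of n eps] N T s by (intro divide_left_mono mult_left_mono mult_pos_pos) auto
  also have "\<dots> = 2 * ln 2 * exp (3 / 2) * (T * sqrt s / real N / 2)"
    by (simp add: exp_minus field_simps)
  also have "\<dots> \<le> 2 * ln 2 * exp (3 / 2) * (T * sqrt s / real N / Q)"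
    using Q N T s by (intro mult_left_mono divide_left_mono) auto
  also have "T * sqrt s / real N / Q
               = 2 powr (real n * (1 - bin_entropy (real eps / real n))
                   + 1 / 2 * log 2 s - log 2 (real N) - log 2 Q)"
    using N Q s by (simp add: T_def powr_diff powr_add powr_half_sqrt_powr)
  finally show ?thesis
    unfolding s_def Q_def .
qed

theorem corollary4p2:
  "\<exists>c C. c > 0 \<and> C > 0 \<and>
     (\<forall>n N eps :: nat. n \<ge> 1 \<and> N \<ge> 1 \<and> real eps / real n \<le> 1 / 2 \<and>
        real N < 2 powr (real n * (1 - bin_entropy (real eps / real n)) - 1) \<longrightarrow>
        m_out n N eps \<ge> c * 2 powr (real n * (1 - bin_entropy (real eps / real n))
            - log 2 (real N) - log 2 (1 + 6 * (real N - 1) / 2 ^ (n + 1)))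
        \<and> (eps \<ge> 1 \<longrightarrow>
        m_out n N eps \<le> C * 2 powr (real n * (1 - bin_entropy (real eps / real n))
            + 1 / 2 * log 2 (real eps * (1 - real eps / real n))
            - log 2 (real N) - log 2 (1 + (real N - 1) / 2 ^ (n + 1)))))"
proof (intro exI conjI allI impI)
  show "0 < ln 2 / (6 :: real)" and "0 < 2 * ln 2 * exp (3 / 2 :: real)"
    by simp_all
  fix n N eps :: nat
  assume hyps: "n \<ge> 1 \<and> N \<ge> 1 \<and> real eps / real n \<le> 1 / 2 \<and>
    real N < 2 powr (real n * (1 - bin_entropy (real eps / real n)) - 1)"
  \<comment> \<open>\<open>n \<ge> 1\<close> is needed here, as \<open>real eps / 0 = 0\<close>\<close>
  then have "real (2 * eps) \<le> real n"
    by (auto simp: divide_simps)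
  then have "2 * eps \<le> n"
    by (simp only: of_nat_le_iff)
  with hyps show "ln 2 / 6 * 2 powr (real n * (1 - bin_entropy (real eps / real n))
            - log 2 (real N) - log 2 (1 + 6 * (real N - 1) / 2 ^ (n + 1))) \<le> m_out n N eps"
    by (intro m_out_lower_bound) auto
  assume "eps \<ge> 1"
  with hyps \<open>2 * eps \<le> n\<close> show "m_out n N eps \<le> 2 * ln 2 * exp (3 / 2)
      * 2 powr (real n * (1 - bin_entropy (real eps / real n))
            + 1 / 2 * log 2 (real eps * (1 - real eps / real n))
            - log 2 (real N) - log 2 (1 + (real N - 1) / 2 ^ (n + 1)))"
    by (intro m_out_upper_bound) auto
qed

end
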